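(* Let $A$ be a finite abelian group of even order, let $T$ be a square-free subset of $A$, and let $X\subseteq A$ be inverse-closed (i.e. $-X=X$). Then $X$ is a perfect code of $\mathrm{CayS}(A,T)$ if and only if $A=X\oplus T^0$, where $T^0=T\cup\{0\}$.
   Context: $A$ is written additively with identity $0$. An element $x$ of $A$ is a square if $x=2y$ for some $y\in A$; a subset is square-free if it contains no squares. For a square-free $T\subseteq A$, the Cayley sum graph $\mathrm{CayS}(A,T)$ is the simple graph with vertex set $A$ in which distinct $x,y$ are adjacent iff $x+y\in T$. A subset $C$ of the vertex set of a graph is a perfect code if every vertex is at distance at most one from exactly one vertex of $C$. For subsets $M,N\subseteq A$, we write $A=M\oplus N$ if every element $a\in A$ can be written in a unique way as $a=m+n$ with $m\in M$, $n\in N$. *)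

theory Defs
  imports Main
begin

definition is_square :: "'a::ab_group_add \<Rightarrow> bool" where
  "is_square x \<longleftrightarrow> (\<exists>y. x = y + y)"

definition square_free :: "'a::ab_group_add set \<Rightarrow> bool" where
  "square_free T \<longleftrightarrow> (\<forall>x\<in>T. \<not> is_square x)"

definition cays_adj :: "'a::ab_group_add set \<Rightarrow> 'a \<Rightarrow> 'a \<Rightarrow> bool" where
  "cays_adj T x y \<longleftrightarrow> x \<noteq> y \<and> x + y \<in> T"

definition perfect_code :: "'v set \<Rightarrow> ('v \<Rightarrow> 'v \<Rightarrow> bool) \<Rightarrow> 'v set \<Rightarrow> bool" where
  "perfect_code V E C \<longleftrightarrow> C \<subseteq> V \<and> (\<forall>v\<in>V. \<exists>!c. c \<in> C \<and> (v = c \<or> E v c))"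

definition direct_sum :: "'a::ab_group_add set \<Rightarrow> 'a set \<Rightarrow> 'a set \<Rightarrow> bool" where
  "direct_sum A M N \<longleftrightarrow> (\<forall>a\<in>A. \<exists>!p. fst p \<in> M \<and> snd p \<in> N \<and> a = fst p + snd p)"

end

theory Submission
  imports Defs
begin

text \<open>Square-freeness of T means no vertex v of CayS(A,T) is adjacent to itself, so the vertices
  of X within distance one of v are those in ({v} \<inter> X) \<union> R, where R = {c \<in> X. v + c \<in> T}
  and v \<notin> R. Since X = -X, the decompositions v = x + t with x \<in> X and t \<in> T \<union> {0}
  correspond to the elements c = -x of ({-v} \<inter> X) \<union> R, and -v \<notin> R because 0 \<notin> T.
  As v \<in> X iff -v \<in> X, both sets are singletons exactly when R is empty (if v \<in> X) or a
  singleton (if v \<notin> X).\<close>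

lemma ex1_exchange_point:
  assumes "a \<notin> R" and "b \<notin> R" and "a \<in> X \<longleftrightarrow> b \<in> X"
  shows "(\<exists>!c. c \<in> X \<and> (c = a \<or> c \<in> R)) \<longleftrightarrow> (\<exists>!c. c \<in> X \<and> (c = b \<or> c \<in> R))"
  using assms by blast

lemma ex1_uminus_reindex:
  fixes P :: "'a::group_add \<Rightarrow> bool"
  shows "(\<exists>!x. P (- x)) \<longleftrightarrow> (\<exists>!x. P x)"
  unfolding Ex1_def by (metis minus_minus)

lemma direct_sum_iff_ex1_diff:
  "direct_sum A M N \<longleftrightarrow> (\<forall>a\<in>A. \<exists>!m. m \<in> M \<and> a - m \<in> N)"
proof -
  have "(\<exists>!p. fst p \<in> M \<and> snd p \<in> N \<and> a = fst p + snd p) \<longleftrightarrow> (\<exists>!m. m \<in> M \<and> a - m \<in> N)"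
    for a
  proof
    assume "\<exists>!p. fst p \<in> M \<and> snd p \<in> N \<and> a = fst p + snd p"
    then obtain m n where "m \<in> M" "n \<in> N" "a = m + n"
      and uniq: "\<And>m' n'. m' \<in> M \<Longrightarrow> n' \<in> N \<Longrightarrow> a = m' + n' \<Longrightarrow> m' = m"
      by (metis fst_conv snd_conv)
    then show "\<exists>!m. m \<in> M \<and> a - m \<in> N"
      by (metis add_diff_cancel_left' diff_add_cancel)
  next
    assume "\<exists>!m. m \<in> M \<and> a - m \<in> N"
    then obtain m where "m \<in> M" "a - m \<in> N"
      and uniq: "\<And>m'. m' \<in> M \<Longrightarrow> a - m' \<in> N \<Longrightarrow> m' = m"
      by blast
    show "\<exists>!p. fst p \<in> M \<and> snd p \<in> N \<and> a = fst p + snd p"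
    proof (rule ex1I[of _ "(m, a - m)"])
      fix p assume p: "fst p \<in> M \<and> snd p \<in> N \<and> a = fst p + snd p"
      then have "fst p = m"
        using uniq[of "fst p"] by simp
      with p show "p = (m, a - m)"
        by (simp add: prod_eq_iff)
    qed (use \<open>m \<in> M\<close> \<open>a - m \<in> N\<close> in simp)
  qed
  then show ?thesis
    by (simp add: direct_sum_def)
qed

lemma direct_sum_inverse_closed_iff:
  assumes "uminus ` X = X"
  shows "direct_sum A X N \<longleftrightarrow> (\<forall>a\<in>A. \<exists>!c. c \<in> X \<and> a + c \<in> N)"
proof -
  have "- c \<in> X \<longleftrightarrow> c \<in> X" for c
    using assms by (metis image_iff minus_minus)
  then have "(\<exists>!m. m \<in> X \<and> a - m \<in> N) \<longleftrightarrow> (\<exists>!c. c \<in> X \<and> a + c \<in> N)" for a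
    using ex1_uminus_reindex[where P = "\<lambda>m. m \<in> X \<and> a - m \<in> N"] by simp
  then show ?thesis
    by (simp add: direct_sum_iff_ex1_diff)
qed

lemma square_free_add_self_notin:
  "square_free T \<Longrightarrow> v + v \<notin> T"
  by (auto simp: square_free_def is_square_def)

lemma perfect_code_cays_iff:
  assumes "square_free T"
  shows "perfect_code UNIV (cays_adj T) C \<longleftrightarrow> (\<forall>v. \<exists>!c. c \<in> C \<and> (c = v \<or> v + c \<in> T))"
proof -
  have "(v = c \<or> cays_adj T v c) \<longleftrightarrow> (c = v \<or> v + c \<in> T)" for v c
    using square_free_add_self_notin[OF assms] by (auto simp: cays_adj_def)
  then show ?thesis
    by (simp add: perfect_code_def)
qed

theorem corollary2p6:
  fixes T X :: "'a::{ab_group_add, finite} set"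
  assumes "even (card (UNIV :: 'a set))"
    and "square_free T"
    and "uminus ` X = X"
  shows "perfect_code UNIV (cays_adj T) X \<longleftrightarrow> direct_sum UNIV X (insert 0 T)"
proof -
  have X_uminus: "- v \<in> X \<longleftrightarrow> v \<in> X" for v
    using assms(3) by (metis image_iff minus_minus)
  have no_loop: "v \<notin> {c. v + c \<in> T}" and zero_notin: "- v \<notin> {c. v + c \<in> T}" for v :: 'a
    using square_free_add_self_notin[OF assms(2), of v] square_free_add_self_notin[OF assms(2), of 0]
    by simp_all
  have "v + c \<in> insert 0 T \<longleftrightarrow> c = - v \<or> v + c \<in> T" for v c :: 'a
    by (auto simp: add_eq_0_iff)
  then have "direct_sum UNIV X (insert 0 T) \<longleftrightarrow> (\<forall>v. \<exists>!c. c \<in> X \<and> (c = - v \<or> v + c \<in> T))"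
    by (simp add: direct_sum_inverse_closed_iff[OF assms(3)])
  also have "\<dots> \<longleftrightarrow> (\<forall>v. \<exists>!c. c \<in> X \<and> (c = v \<or> v + c \<in> T))"
    using ex1_exchange_point[OF no_loop zero_notin, where X = X] X_uminus by simp
  finally show ?thesis
    by (simp add: perfect_code_cays_iff[OF assms(2)])
qed

end
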